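(* Let $N\ge2$. Equip the space of real symmetric $N\times N$ matrices with the inner product $\langle A|B\rangle=\operatorname{Tr}(AB)$ and norm $\|A\|=\sqrt{\langle A|A\rangle}$, and write $\hat A=A-\mathbb{1}_N$. (i) Every Ising matrix $\boldsymbol\gamma\in\mathcal{I}$ satisfies $\|\hat{\boldsymbol\gamma}\|=\sqrt{N(N-1)}$. (ii) For $0\le k\le\lfloor N/2\rfloor$ and every $\boldsymbol\gamma\in\mathcal{I}_k$, $\langle\hat{\boldsymbol\gamma}|\hat A_0\rangle=(N-2k)^2-N$. (iii) For every $\boldsymbol\gamma\in\mathcal{I}_k$, $\|\boldsymbol\gamma-A_0\|=2\sqrt{2k(N-k)}$. (iv) The barycenter $B_k=\frac{1}{|\mathcal{I}_k|}\sum_{\boldsymbol\gamma\in\mathcal{I}_k}\boldsymbol\gamma$ satisfies $B_k=\Bigl(1-\frac{4k(N-k)}{N(N-1)}\Bigr)A_0+\frac{4k(N-k)}{N(N-1)}\mathbb{1}_N$.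
   Context: An Ising matrix is a matrix $\mathbf{s}\mathbf{s}^\top$ with $\mathbf{s}\in\{+1,-1\}^N$ (a column vector); $\mathcal{I}$ is the set of all Ising matrices (the rank-one elements of the set of positive semi-definite symmetric $N\times N$ matrices with unit diagonal). For $\mathcal{K}\subseteq\{1,\ldots,N\}$, $A_{\mathcal K}$ denotes the Ising matrix of the vector with $s_\mu=-1$ for $\mu\in\mathcal K$ and $s_\mu=+1$ otherwise; $A_0=A_\emptyset$ is the all-ones matrix. For $0\le k\le\lfloor N/2\rfloor$, $\mathcal{I}_k=\{A_{\mathcal K}:|\mathcal K|=k\}$ (as a set of matrices). $\mathbb{1}_N$ is the identity matrix. *)

theory Defs
  imports "HOL-Analysis.Analysis"
begin

text \<open>N x N real matrices indexed by a finite type 'n, N = CARD('n).\<close>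

definition ising_mat :: "real^'n \<Rightarrow> real^'n^'n" where
  "ising_mat s = (\<chi> i j. s$i * s$j)"

definition ising_set :: "(real^'n^'n) set" where
  "ising_set = {ising_mat s | s. \<forall>i. s$i = 1 \<or> s$i = -1}"

definition A_of :: "'n set \<Rightarrow> real^'n^'n" where
  "A_of K = ising_mat (\<chi> i. if i \<in> K then -1 else 1)"

definition A0 :: "real^'n^'n" where
  "A0 = A_of {}"

definition ising_k :: "nat \<Rightarrow> (real^'n^'n) set" where
  "ising_k k = {A_of K | K::'n set. card K = k}"

definition minner :: "real^'n^'n \<Rightarrow> real^'n^'n \<Rightarrow> real" where
  "minner A B = trace (A ** B)"

definition mnorm :: "real^'n^'n \<Rightarrow> real" where
  "mnorm A = sqrt (minner A A)"

definition hat :: "real^'n^'n \<Rightarrow> real^'n^'n" where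
  "hat A = A - mat 1"

definition barycenter :: "nat \<Rightarrow> real^'n^'n" where
  "barycenter k = (1 / real (card (ising_k k :: (real^'n^'n) set))) *\<^sub>R (\<Sum>g\<in>ising_k k. g)"

end

theory Submission
  imports Defs
begin

text \<open>Everything is an entrywise computation with the spins \<open>s\<^sub>i = \<plusminus>1\<close> of an Ising
matrix: its entries are \<open>s\<^sub>i s\<^sub>j\<close>, so its diagonal is \<open>1\<close> and its entries sum to
\<open>(\<Sum>\<^sub>i s\<^sub>i)\<^sup>2 = (N - 2k)\<^sup>2\<close>. For the barycenter \<open>B\<^sub>k\<close>, relabelling the coordinates by a
permutation maps \<open>\<I>\<^sub>k\<close> onto itself, so all off-diagonal entries of \<open>B\<^sub>k\<close> coincide; its
diagonal is \<open>1\<close> and its entries sum to \<open>(N - 2k)\<^sup>2\<close>, which pins down the off-diagonal value.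
Working with the set \<open>\<I>\<^sub>k\<close> directly avoids counting the coincidence \<open>A\<^sub>K = A\<^bsub>-K\<^esub>\<close>
that occurs when \<open>2k = N\<close>.\<close>

definition spin :: "'n set \<Rightarrow> 'n \<Rightarrow> real" where
  "spin K i = (if i \<in> K then -1 else 1)"

lemma A_of_nth: "A_of K $ i $ j = spin K i * spin K j"
  by (simp add: A_of_def ising_mat_def spin_def)

lemma A_of_diag [simp]: "A_of K $ i $ i = 1"
  by (simp add: A_of_nth spin_def)

lemma A0_nth [simp]: "A0 $ i $ j = 1"
  by (simp add: A0_def A_of_nth spin_def)

lemma minner_eq_sum: "minner A B = (\<Sum>i\<in>UNIV. \<Sum>j\<in>UNIV. A $ i $ j * B $ j $ i)"
  by (simp add: minner_def trace_def matrix_matrix_mult_def)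

lemma sum_spin:
  fixes K :: "'n::finite set"
  shows "sum (spin K) UNIV = real CARD('n) - 2 * real (card K)"
proof -
  have "sum (spin K) UNIV = (\<Sum>i\<in>UNIV. 1 - 2 * (if i \<in> K then 1 else 0))"
    by (rule sum.cong) (auto simp: spin_def)
  then show ?thesis
    by (simp add: sum_subtractf sum_distrib_left[symmetric] sum.If_cases)
qed

lemma sum_A_of_entries:
  fixes K :: "'n::finite set"
  shows "(\<Sum>i\<in>UNIV. \<Sum>j\<in>UNIV. A_of K $ i $ j) = (real CARD('n) - 2 * real (card K))\<^sup>2"
  unfolding A_of_nth sum_product[symmetric] sum_spin power2_eq_square ..

lemma sum_off_diagonal_ones:
  "(\<Sum>j\<in>UNIV. if (i::'n::finite) = j then 0 else 1::real) = real CARD('n) - 1"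
  by (simp add: sum.If_cases Compl_eq_Diff_UNIV)

lemma mnorm_hat_ising_mat:
  fixes s :: "real^'n::finite"
  assumes s: "\<forall>i. s $ i = 1 \<or> s $ i = -1"
  shows "mnorm (hat (ising_mat s)) = sqrt (real CARD('n) * (real CARD('n) - 1))"
proof -
  have "hat (ising_mat s) $ i $ j * hat (ising_mat s) $ j $ i = (if i = j then 0 else 1)" for i j
    using s[rule_format, of i] s[rule_format, of j]
    by (auto simp: hat_def ising_mat_def mat_def)
  then show ?thesis
    by (simp add: mnorm_def minner_eq_sum sum_off_diagonal_ones)
qed

lemma minner_hat_A_of_hat_A0:
  fixes K :: "'n::finite set"
  shows "minner (hat (A_of K)) (hat A0) = (real CARD('n) - 2 * real (card K))\<^sup>2 - real CARD('n)"
proof -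
  have "hat (A_of K) $ i $ j * hat A0 $ j $ i = A_of K $ i $ j - (if i = j then 1 else 0)" for i j
    by (simp add: hat_def mat_def)
  then show ?thesis
    by (simp add: minner_eq_sum sum_subtractf sum_A_of_entries)
qed

lemma mnorm_A_of_minus_A0:
  fixes K :: "'n::finite set"
  shows "mnorm (A_of K - A0) = 2 * sqrt (2 * real (card K) * (real CARD('n) - real (card K)))"
proof -
  have "(A_of K - A0) $ i $ j * (A_of K - A0) $ j $ i = 2 - 2 * A_of K $ i $ j" for i j
    by (auto simp: A_of_nth spin_def)
  then have "minner (A_of K - A0) (A_of K - A0)
      = 2 * real CARD('n) * real CARD('n) - 2 * (real CARD('n) - 2 * real (card K))\<^sup>2"
    by (simp add: minner_eq_sum sum_subtractf sum_distrib_left[symmetric] sum_A_of_entries)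
  also have "\<dots> = 2\<^sup>2 * (2 * real (card K) * (real CARD('n) - real (card K)))"
    by (simp add: power2_eq_square algebra_simps)
  finally show ?thesis
    by (simp only: mnorm_def real_sqrt_mult[of "2\<^sup>2"] real_sqrt_abs)
qed

lemma ising_k_permute:
  fixes p :: "'n::finite \<Rightarrow> 'n"
  assumes p: "bij p" and g: "g \<in> ising_k k"
  shows "(\<chi> i j. g $ p i $ p j) \<in> ising_k k"
proof -
  obtain K where "g = A_of K" "card K = k"
    using g by (auto simp: ising_k_def)
  moreover have "(\<chi> i j. A_of K $ p i $ p j) = A_of (p -` K)"
    by (simp add: vec_eq_iff A_of_nth spin_def)
  moreover have "card (p -` K) = card K"
    using p by (simp add: card_vimage_inj bij_is_inj bij_is_surj)
  ultimately show ?thesis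
    by (auto simp: ising_k_def)
qed

lemma sum_ising_k_permute:
  fixes p :: "'n::finite \<Rightarrow> 'n"
  assumes p: "bij p"
  shows "(\<Sum>g\<in>ising_k k. g $ p i $ p j) = (\<Sum>g\<in>ising_k k. g $ i $ j)"
proof (rule sum.reindex_bij_witness[where j = "\<lambda>g. \<chi> i j. g $ p i $ p j"
                                        and i = "\<lambda>g. \<chi> i j. g $ inv p i $ inv p j"])
  have "bij (inv p)"
    using p by (rule bij_imp_bij_inv)
  then show "(\<chi> i j. g $ inv p i $ inv p j) \<in> ising_k k" if "g \<in> ising_k k" for g
    using that by (rule ising_k_permute)
  show "(\<chi> i j. g $ p i $ p j) \<in> ising_k k" if "g \<in> ising_k k" for g
    using p that by (rule ising_k_permute)
qed (simp_all add: vec_eq_iff bij_is_inj bij_is_surj surj_f_inv_f p)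

lemma exists_bij_map_pair:
  fixes i j i' j' :: 'a
  assumes "i \<noteq> j" "i' \<noteq> j'"
  shows "\<exists>p. bij p \<and> p i' = i \<and> p j' = j"
proof -
  define j1 where "j1 = Transposition.transpose i' i j'"
  have "j1 \<noteq> i"
    using assms by (auto simp: j1_def transpose_eq_iff)
  then show ?thesis
    using assms
    by (intro exI[of _ "Transposition.transpose j1 j \<circ> Transposition.transpose i' i"])
       (auto simp: j1_def bij_comp)
qed

lemma finite_ising_k [simp]: "finite (ising_k k :: (real^'n::finite^'n) set)"
proof -
  have "ising_k k = A_of ` {K :: 'n set. card K = k}"
    by (auto simp: ising_k_def)
  then show ?thesis
    by simp
qed

lemma ising_k_nonempty:
  assumes "k \<le> CARD('n::finite)"
  shows "(ising_k k :: (real^'n^'n) set) \<noteq> {}"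
proof -
  obtain K :: "'n set" where "card K = k"
    using obtain_subset_with_card_n[of k "UNIV :: 'n set"] assms by auto
  then show ?thesis
    by (auto simp: ising_k_def)
qed

lemma barycenter_nth:
  "(barycenter k :: real^'n::finite^'n) $ i $ j
     = (\<Sum>g\<in>ising_k k. g $ i $ j) / real (card (ising_k k :: (real^'n^'n) set))"
  by (simp add: barycenter_def sum_component)

lemma barycenter_diag:
  assumes "k \<le> CARD('n::finite)"
  shows "(barycenter k :: real^'n^'n) $ i $ i = 1"
proof -
  have "g $ i $ i = 1" if "g \<in> ising_k k" for g :: "real^'n^'n"
    using that by (auto simp: ising_k_def)
  then show ?thesis
    using ising_k_nonempty[OF assms]
    by (simp add: barycenter_nth card_gt_0_iff)
qed

lemma barycenter_offdiag_eq:
  fixes i j i' j' :: "'n::finite"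
  assumes "i \<noteq> j" "i' \<noteq> j'"
  shows "(barycenter k :: real^'n^'n) $ i' $ j' = barycenter k $ i $ j"
proof -
  obtain p :: "'n \<Rightarrow> 'n" where "bij p" "p i' = i" "p j' = j"
    using exists_bij_map_pair[OF assms] by blast
  then show ?thesis
    using sum_ising_k_permute[where p = p and k = k and i = i' and j = j']
    by (simp add: barycenter_nth)
qed

lemma sum_barycenter_entries:
  assumes "k \<le> CARD('n::finite)"
  shows "(\<Sum>i\<in>UNIV. \<Sum>j\<in>UNIV. (barycenter k :: real^'n^'n) $ i $ j)
       = (real CARD('n) - 2 * real k)\<^sup>2"
proof -
  let ?I = "ising_k k :: (real^'n^'n) set"
  have "(\<Sum>i\<in>UNIV. \<Sum>j\<in>UNIV. \<Sum>g\<in>?I. g $ i $ j) = (\<Sum>i\<in>UNIV. \<Sum>g\<in>?I. \<Sum>j\<in>UNIV. g $ i $ j)"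
    by (rule sum.cong[OF refl], rule sum.swap)
  also have "\<dots> = (\<Sum>g\<in>?I. \<Sum>i\<in>UNIV. \<Sum>j\<in>UNIV. g $ i $ j)"
    by (rule sum.swap)
  also have "\<dots> = (\<Sum>g\<in>?I. (real CARD('n) - 2 * real k)\<^sup>2)"
    by (rule sum.cong) (auto simp: ising_k_def sum_A_of_entries)
  finally show ?thesis
    using ising_k_nonempty[OF assms]
    by (simp add: barycenter_nth sum_divide_distrib[symmetric] card_eq_0_iff)
qed

lemma barycenter_offdiag:
  fixes i j :: "'n::finite"
  assumes N2: "CARD('n) \<ge> 2" and kN: "k \<le> CARD('n)" and "i \<noteq> j"
  shows "(barycenter k :: real^'n^'n) $ i $ j
       = 1 - 4 * real k * (real CARD('n) - real k) / (real CARD('n) * (real CARD('n) - 1))"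
proof -
  define N where "N = real CARD('n)"
  define c where "c = (barycenter k :: real^'n^'n) $ i $ j"
  have "(\<Sum>j'\<in>UNIV. (barycenter k :: real^'n^'n) $ i' $ j') = 1 + (N - 1) * c" for i'
  proof -
    have "(\<Sum>j'\<in>UNIV. (barycenter k :: real^'n^'n) $ i' $ j')
        = (\<Sum>j'\<in>UNIV. c + (if i' = j' then 1 - c else 0))"
      by (rule sum.cong)
         (auto simp: c_def barycenter_diag[OF kN] intro: barycenter_offdiag_eq[OF \<open>i \<noteq> j\<close>])
    then show ?thesis
      by (simp add: sum.distrib N_def algebra_simps)
  qed
  then have "N * (1 + (N - 1) * c) = (N - 2 * real k)\<^sup>2"
    using sum_barycenter_entries[OF kN] by (simp add: N_def)
  then have "c * (N * (N - 1)) = N * (N - 1) - 4 * real k * (N - real k)"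
    by algebra
  moreover have "N * (N - 1) \<noteq> 0"
    using N2 by (simp add: N_def)
  ultimately have "c = 1 - 4 * real k * (N - real k) / (N * (N - 1))"
    by (simp add: field_simps)
  then show ?thesis
    by (simp add: c_def N_def)
qed

theorem proposition1:
  fixes k :: nat
  assumes N2: "CARD('n::finite) \<ge> 2"
    and kle: "k \<le> CARD('n) div 2"
  shows "(\<forall>g \<in> (ising_set :: (real^'n^'n) set).
            mnorm (hat g) = sqrt (real (CARD('n)) * (real (CARD('n)) - 1)))
       \<and> (\<forall>g \<in> (ising_k k :: (real^'n^'n) set).
            minner (hat g) (hat A0) = (real (CARD('n)) - 2 * real k)^2 - real (CARD('n)))
       \<and> (\<forall>g \<in> (ising_k k :: (real^'n^'n) set).
            mnorm (g - A0) = 2 * sqrt (2 * real k * (real (CARD('n)) - real k)))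
       \<and> (barycenter k :: real^'n^'n) =
            (1 - 4 * real k * (real (CARD('n)) - real k) / (real (CARD('n)) * (real (CARD('n)) - 1))) *\<^sub>R A0
            + (4 * real k * (real (CARD('n)) - real k) / (real (CARD('n)) * (real (CARD('n)) - 1))) *\<^sub>R mat 1"
proof (intro conjI)
  have kN: "k \<le> CARD('n)"
    using kle by simp
  show "\<forall>g \<in> (ising_set :: (real^'n^'n) set).
      mnorm (hat g) = sqrt (real (CARD('n)) * (real (CARD('n)) - 1))"
    by (auto simp: ising_set_def mnorm_hat_ising_mat)
  show "\<forall>g \<in> (ising_k k :: (real^'n^'n) set).
      minner (hat g) (hat A0) = (real (CARD('n)) - 2 * real k)^2 - real (CARD('n))"
    by (auto simp: ising_k_def minner_hat_A_of_hat_A0)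
  show "\<forall>g \<in> (ising_k k :: (real^'n^'n) set).
      mnorm (g - A0) = 2 * sqrt (2 * real k * (real (CARD('n)) - real k))"
    by (auto simp: ising_k_def mnorm_A_of_minus_A0)
  show "(barycenter k :: real^'n^'n) =
      (1 - 4 * real k * (real (CARD('n)) - real k) / (real (CARD('n)) * (real (CARD('n)) - 1))) *\<^sub>R A0
      + (4 * real k * (real (CARD('n)) - real k) / (real (CARD('n)) * (real (CARD('n)) - 1))) *\<^sub>R mat 1"
    by (auto simp: vec_eq_iff mat_def barycenter_diag[OF kN] barycenter_offdiag[OF N2 kN])
qed

end
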